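(* Suppose that $n=m$ and $W=(w_{ij})\in(\mathbb{R}_{>0})^{n\times n}$ is symmetric. (a) The following recursion holds: $$T^{n,n}(W) = R^{n,n}_n \begin{pmatrix} \left[ R^{n,n-1}_n \begin{pmatrix} T^{n-1,n-1}(W_{n-1,n-1}) \\ w_{1n}\ \ldots\ w_{n-1,n} \end{pmatrix} \right]^t \\ w_{1n}\ \ldots\ w_{nn} \end{pmatrix} .$$ Moreover, if $(s_{ij})$ denote the elements of the $(n-1)\times n$ matrix $S=\left[ R^{n,n-1}_n \begin{pmatrix} T^{n-1,n-1}(W_{n-1,n-1})\\ w_{1n}\ \ldots\ w_{n-1,n} \end{pmatrix} \right]^t$ and $(t_{ij})$ the elements of $T^{n,n}(W)$, then $t_{ij}=s_{ij}$ for $1\le i<j\le n$, $t_{11}=s_{12}/(2s_{11})$, $t_{ii}=s_{i,i+1}s_{i-1,i}/s_{ii}$ for $2\le i\le n-1$, and $t_{nn}=2s_{n-1,n}w_{nn}$. (b) For $n\ge 1$, $$4^{\lfloor n/2\rfloor} \prod_{i=1}^n w_{ii} = \frac{\prod_{j=0}^{\lfloor\frac{n-1}2\rfloor} t_{n-2j, \,n-2j}}{\prod_{j=0}^{\lfloor\frac{n-2}2\rfloor} t_{n-1-2j,\, n-1-2j}} = \frac{\prod_{i\ \mathrm{odd}} z_{ni}}{\prod_{i\ \mathrm{even}} z_{ni}},$$ where $z_{ni}=t_{n-i+1,n-i+1}$, $1\le i\le n$.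
   Context: For $n,m\ge1$ and $X=(x_{ij})\in(\mathbb{R}_{>0})^{n\times m}$, define local moves: for $2\le i\le n$, $2\le j\le m$, $l_{ij}$ replaces the submatrix $\begin{pmatrix} x_{i-1,j-1}& x_{i-1,j}\\ x_{i,j-1}& x_{ij}\end{pmatrix}=\begin{pmatrix} a& b\\ c& d\end{pmatrix}$ by $\begin{pmatrix} bc/(ab+ac) & b\\ c& d(b+c) \end{pmatrix}$; $l_{i1}$ replaces $x_{i1}$ by $x_{i-1,1}x_{i1}$; $l_{1j}$ replaces $x_{1j}$ by $x_{1,j-1}x_{1j}$; $l_{11}$ is the identity. Set $\pi^j_i=l_{ij}\circ\cdots\circ l_{i1}$ and $R^{n,m}_i=\pi_1^{m-i+1}\circ\cdots\circ\pi^m_i$ if $i\le m$, $R^{n,m}_i=\pi^1_{i-m+1}\circ\cdots\circ\pi^m_i$ if $i\ge m$ (maps on $(\mathbb{R}_{>0})^{n\times m}$). The geometric RSK map is $T^{n,m}=R^{n,m}_n\circ\cdots\circ R^{n,m}_1$. $W_{k,k}=(w_{ij},1\le i,j\le k)$, and $M^t$ denotes transpose. The $z_{ni}$ are the bottom-row (shape) entries of the pattern $P$ associated with $T^{n,n}(W)$. *)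

theory Defs
  imports Complex_Main
begin

text \<open>Matrices are represented as functions nat => nat => real, with 1-based indices.
  An n x m matrix is given by its entries X i j for 1 <= i <= n, 1 <= j <= m;
  entries outside this range are never read nor written by the local moves
  l_ij with 1 <= i <= n, 1 <= j <= m.\<close>

type_synonym mat = "nat \<Rightarrow> nat \<Rightarrow> real"

definition lmove :: "nat \<Rightarrow> nat \<Rightarrow> mat \<Rightarrow> mat" where
  "lmove i j X =
     (if i = 1 \<and> j = 1 then X
      else if j = 1 then (\<lambda>p q. if p = i \<and> q = 1 then X (i-1) 1 * X i 1 else X p q)
      else if i = 1 then (\<lambda>p q. if p = 1 \<and> q = j then X 1 (j-1) * X 1 j else X p q)
      else (let a = X (i-1) (j-1); b = X (i-1) j; c = X i (j-1); d = X i j in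
            (\<lambda>p q. if p = i-1 \<and> q = j-1 then b * c / (a * b + a * c)
                   else if p = i \<and> q = j then d * (b + c)
                   else X p q)))"

fun pimove :: "nat \<Rightarrow> nat \<Rightarrow> mat \<Rightarrow> mat" where
  "pimove i 0 X = X"
| "pimove i (Suc j) X = lmove i (Suc j) (pimove i j X)"

text \<open>Rmap n m i = R^{n,m}_i: for i <= m it is pi_1^{m-i+1} o ... o pi_i^m,
  for i >= m it is pi_{i-m+1}^1 o ... o pi_i^m; i.e. apply pi_{i-k}^{m-k}
  for k = 0, 1, ..., min i m - 1 in this order.\<close>
definition Rmap :: "nat \<Rightarrow> nat \<Rightarrow> nat \<Rightarrow> mat \<Rightarrow> mat" where
  "Rmap n m i X = fold (\<lambda>k Y. pimove (i - k) (m - k) Y) [0..<min i m] X"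

text \<open>gRSK n m = T^{n,m} = R^{n,m}_n o ... o R^{n,m}_1.\<close>
definition gRSK :: "nat \<Rightarrow> nat \<Rightarrow> mat \<Rightarrow> mat" where
  "gRSK n m X = fold (\<lambda>i Y. Rmap n m i Y) [1..<n+1] X"

definition zshape :: "nat \<Rightarrow> mat \<Rightarrow> nat \<Rightarrow> real" where
  "zshape n W i = gRSK n n W (n - i + 1) (n - i + 1)"

end

theory Submission
  imports Defs "HOL-Library.Product_Lexorder"
begin

text \<open>\<open>T\<^sup>n\<^sup>,\<^sup>m\<close> is a composition of local moves \<open>l\<^sub>a\<^sub>b\<close>, each reading the \<open>2 \<times> 2\<close> window with
  lower right corner \<open>(a, b)\<close> and writing two of its cells, so moves whose windows do not
  interfere commute. Listing the moves of \<open>T\<^sup>n\<^sup>,\<^sup>m\<close> and, with rows and columns exchanged,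
  those of \<open>T\<^sup>m\<^sup>,\<^sup>n\<close> gives two orderings of the same moves in which every pair met in
  opposite orders commutes; hence \<open>T(X\<^sup>t) = T(X)\<^sup>t\<close>. For symmetric \<open>W\<close> this shows that
  \<open>T\<^sup>n\<^sup>-\<^sup>1\<^sup>,\<^sup>n(W)\<close> consists of \<open>S\<close> on top of the last row of \<open>W\<close>, and \<open>T\<^sup>n\<^sup>,\<^sup>n(W)\<close> is \<open>R\<^sup>n\<^sup>,\<^sup>n\<^sub>n\<close>
  of that, which is (a). Inside \<open>R\<^sup>n\<^sup>,\<^sup>n\<^sub>n\<close> the last move of \<open>\<pi>\<^sub>r\<^sup>r\<close> sets the diagonal entries
  \<open>(r-1, r-1)\<close> and \<open>(r, r)\<close> from \<open>s\<^sub>r\<^sub>-\<^sub>1\<^sub>,\<^sub>r\<close> and the final entry \<open>t\<^sub>r\<^sub>,\<^sub>r\<^sub>-\<^sub>1\<close>, which by symmetry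
  is \<open>t\<^sub>r\<^sub>-\<^sub>1\<^sub>,\<^sub>r = s\<^sub>r\<^sub>-\<^sub>1\<^sub>,\<^sub>r\<close>; this gives the diagonal formulas. Then the alternating quotient
  \<open>t\<^sub>n\<^sub>n / t\<^sub>n\<^sub>-\<^sub>1\<^sub>,\<^sub>n\<^sub>-\<^sub>1 \<cdot> t\<^sub>n\<^sub>-\<^sub>2\<^sub>,\<^sub>n\<^sub>-\<^sub>2 \<cdots>\<close> telescopes against the one of the diagonal of \<open>S\<close>, which
  is the diagonal of \<open>T\<^sup>n\<^sup>-\<^sup>1\<^sup>,\<^sup>n\<^sup>-\<^sup>1(W\<^sub>n\<^sub>-\<^sub>1\<^sub>,\<^sub>n\<^sub>-\<^sub>1)\<close>, and (b) follows by induction on \<open>n\<close>.\<close>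

section \<open>Local moves\<close>

definition lmove_window :: "nat \<Rightarrow> nat \<Rightarrow> (nat \<times> nat) set" where
  "lmove_window a b = {a - 1, a} \<times> {b - 1, b}"

definition lmove_writes :: "nat \<Rightarrow> nat \<Rightarrow> (nat \<times> nat) set" where
  "lmove_writes a b = {(a - 1, b - 1), (a, b)}"

lemma lmove_writes_subset_window: "lmove_writes a b \<subseteq> lmove_window a b"
  by (auto simp: lmove_writes_def lmove_window_def)

lemma lmove_outside: "(p, q) \<notin> lmove_writes a b \<Longrightarrow> lmove a b X p q = X p q"
  by (auto simp: lmove_def Let_def lmove_writes_def)

lemma lmove_upper_left:
  "2 \<le> a \<Longrightarrow> 2 \<le> b \<Longrightarrow> lmove a b X (a - 1) (b - 1)
     = X (a - 1) b * X a (b - 1) / (X (a - 1) (b - 1) * X (a - 1) b + X (a - 1) (b - 1) * X a (b - 1))"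
  by (auto simp: lmove_def Let_def)

lemma lmove_lower_right:
  "2 \<le> a \<Longrightarrow> 2 \<le> b \<Longrightarrow> lmove a b X a b = X a b * (X (a - 1) b + X a (b - 1))"
  by (auto simp: lmove_def Let_def)

lemma lmove_first_column: "2 \<le> a \<Longrightarrow> lmove a 1 X a 1 = X (a - 1) 1 * X a 1"
  by (simp add: lmove_def)

lemma lmove_first_row: "2 \<le> b \<Longrightarrow> lmove 1 b X 1 b = X 1 (b - 1) * X 1 b"
  by (simp add: lmove_def)

lemma lmove_1_1: "lmove 1 1 X = X"
  by (simp add: lmove_def)

lemma lmove_cong:
  assumes "\<And>u v. (u, v) \<in> lmove_window a b \<union> {(p, q)} \<Longrightarrow> X u v = Y u v"
  shows "lmove a b X p q = lmove a b Y p q"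
  using assms by (simp add: lmove_def Let_def lmove_window_def)

lemma lmove_commute:
  assumes "lmove_writes a b \<inter> lmove_window c d = {}" "lmove_writes c d \<inter> lmove_window a b = {}"
  shows "lmove a b (lmove c d X) = lmove c d (lmove a b X)"
proof (intro ext)
  fix p q
  have swap_first: "lmove a b (lmove c d X) p q = lmove a b X p q"
    if "(p, q) \<in> lmove_window a b" "lmove_writes c d \<inter> lmove_window a b = {}" for a b c d
    by (rule lmove_cong) (use that in \<open>auto intro: lmove_outside\<close>)
  consider "(p, q) \<in> lmove_writes a b" | "(p, q) \<in> lmove_writes c d"
    | "(p, q) \<notin> lmove_writes a b" "(p, q) \<notin> lmove_writes c d"
    by blast
  then show "lmove a b (lmove c d X) p q = lmove c d (lmove a b X) p q"
  proof cases
    case 1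
    then have "(p, q) \<notin> lmove_writes c d" "(p, q) \<in> lmove_window a b"
      using assms(1) lmove_writes_subset_window by blast+
    then show ?thesis using swap_first assms(2) by (simp add: lmove_outside)
  next
    case 2
    then have "(p, q) \<notin> lmove_writes a b" "(p, q) \<in> lmove_window c d"
      using assms(2) lmove_writes_subset_window by blast+
    then show ?thesis using swap_first[of c d a b] assms(1) by (simp add: lmove_outside)
  next
    case 3
    then show ?thesis by (simp add: lmove_outside)
  qed
qed

definition transpose_mat :: "mat \<Rightarrow> mat" where
  "transpose_mat X = (\<lambda>i j. X j i)"

lemma lmove_transpose:
  "1 \<le> a \<Longrightarrow> 1 \<le> b \<Longrightarrow> lmove a b (transpose_mat X) = transpose_mat (lmove b a X)"
  by (auto simp: lmove_def Let_def transpose_mat_def fun_eq_iff mult.commute add.commute)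

definition eq_on_box :: "nat \<Rightarrow> nat \<Rightarrow> mat \<Rightarrow> mat \<Rightarrow> bool" where
  "eq_on_box P Q X Y \<longleftrightarrow> (\<forall>i\<in>{1..P}. \<forall>j\<in>{1..Q}. X i j = Y i j)"

definition pos_on_box :: "nat \<Rightarrow> nat \<Rightarrow> mat \<Rightarrow> bool" where
  "pos_on_box P Q X \<longleftrightarrow> (\<forall>i\<in>{1..P}. \<forall>j\<in>{1..Q}. X i j > 0)"

lemma lmove_eq_on_box:
  assumes "eq_on_box P Q X Y" "a \<in> {1..P}" "b \<in> {1..Q}"
  shows "eq_on_box P Q (lmove a b X) (lmove a b Y)"
proof -
  have XY: "X u v = Y u v" if "1 \<le> u" "u \<le> P" "1 \<le> v" "v \<le> Q" for u v
    using assms(1) that by (simp add: eq_on_box_def)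
  show ?thesis
    using assms(2,3) unfolding eq_on_box_def lmove_def Let_def by (auto simp: XY)
qed

lemma lmove_pos_on_box:
  assumes pos: "pos_on_box P Q X" and ab: "a \<in> {1..P}" "b \<in> {1..Q}"
  shows "pos_on_box P Q (lmove a b X)"
  unfolding pos_on_box_def
proof (intro ballI)
  fix i j assume ij: "i \<in> {1..P}" "j \<in> {1..Q}"
  have X_pos: "X u v > 0" if "1 \<le> u" "u \<le> P" "1 \<le> v" "v \<le> Q" for u v
    using pos that unfolding pos_on_box_def by auto
  show "lmove a b X i j > 0"
  proof (cases "(i, j) \<in> lmove_writes a b")
    case False
    then show ?thesis using X_pos ij by (simp add: lmove_outside)
  next
    case True
    consider (corner) "a = 1" "b = 1" | (row) "a = 1" "2 \<le> b" | (column) "2 \<le> a" "b = 1"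
      | (inner) "2 \<le> a" "2 \<le> b"
      using ab by force
    then show ?thesis
    proof cases
      case corner
      then have "lmove a b X = X" by (simp only: lmove_1_1)
      then show ?thesis using X_pos ij by simp
    next
      case row
      then have "i = 1" "j = b" using True ij by (auto simp: lmove_writes_def)
      then show ?thesis using row ab X_pos lmove_first_row[of b X] by simp
    next
      case column
      then have "i = a" "j = 1" using True ij by (auto simp: lmove_writes_def)
      then show ?thesis using column ab X_pos lmove_first_column[of a X] by simp
    next
      case inner
      have "X (a - 1) (b - 1) > 0" "X (a - 1) b > 0" "X a (b - 1) > 0" "X a b > 0"
        using inner ab X_pos by auto
      moreover have "(i, j) = (a - 1, b - 1) \<or> (i, j) = (a, b)"
        using True by (simp add: lmove_writes_def)
      ultimately show ?thesis
        using inner lmove_upper_left[of a b X] lmove_lower_right[of a b X] by (auto simp: add_pos_pos)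
    qed
  qed
qed

section \<open>Reordering the moves of \<open>T\<close>; transposition\<close>

lemma fold_commute_through:
  assumes "\<forall>y\<in>set ys. \<forall>z. f x (f y z) = f y (f x z)"
  shows "f x (fold f ys z) = fold f ys (f x z)"
  using assms by (induction ys arbitrary: z) auto

lemma fold_reorder:
  assumes "sorted_wrt R xs" "sorted_wrt Q ys" "set xs = set ys" "distinct xs" "distinct ys"
    and commute: "\<And>x y z. x \<in> set xs \<Longrightarrow> y \<in> set xs \<Longrightarrow> R x y \<Longrightarrow> Q y x \<Longrightarrow> f x (f y z) = f y (f x z)"
  shows "fold f xs z = fold f ys z"
  using assms
proof (induction xs arbitrary: ys z)
  case Nil
  then show ?case by simp
next
  case (Cons x xs)
  obtain ys1 ys2 where ys: "ys = ys1 @ x # ys2"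
    using Cons.prems(3) by (metis list.set_intros(1) split_list)
  have "\<forall>y\<in>set ys1. \<forall>z. f x (f y z) = f y (f x z)"
  proof (intro ballI allI)
    fix y z assume y: "y \<in> set ys1"
    have "y \<in> set xs"
      using Cons.prems(3,5) y ys by auto
    moreover have "Q y x"
      using Cons.prems(2) y ys by (auto simp: sorted_wrt_append)
    ultimately show "f x (f y z) = f y (f x z)"
      using Cons.prems(1) Cons.prems(6)[of x y] by auto
  qed
  then have "fold f ys z = fold f (ys1 @ ys2) (f x z)"
    using ys fold_commute_through[of ys1 f x] by simp
  also have "\<dots> = fold f xs (f x z)"
  proof (rule Cons.IH[symmetric])
    show "sorted_wrt Q (ys1 @ ys2)"
      using Cons.prems(2) ys by (auto simp: sorted_wrt_append)
    show "set xs = set (ys1 @ ys2)"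
      using Cons.prems(3-5) ys by auto
    show "\<And>x y z. x \<in> set xs \<Longrightarrow> y \<in> set xs \<Longrightarrow> R x y \<Longrightarrow> Q y x \<Longrightarrow> f x (f y z) = f y (f x z)"
      using Cons.prems(6) by (meson list.set_intros(2))
  qed (use Cons.prems ys in auto)
  finally show ?case by simp
qed

text \<open>A move \<open>(a, b, k)\<close> is \<open>l\<^sub>a\<^sub>b\<close> performed in round \<open>k\<close> of \<open>R\<^sub>a\<^sub>+\<^sub>k\<close>, i.e.\ inside
  \<open>\<pi>\<^sub>a\<^sup>m\<^sup>-\<^sup>k\<close>. The round does not affect the move; it makes the order of the moves of \<open>T\<close>
  the increasing order of \<open>move_key\<close>.\<close>

fun move :: "nat \<times> nat \<times> nat \<Rightarrow> mat \<Rightarrow> mat" where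
  "move (a, b, k) = lmove a b"

definition Rmap_moves :: "nat \<Rightarrow> nat \<Rightarrow> (nat \<times> nat \<times> nat) list" where
  "Rmap_moves m i = concat (map (\<lambda>k. map (\<lambda>b. (i - k, b, k)) [1..<m - k + 1]) [0..<min i m])"

definition gRSK_moves :: "nat \<Rightarrow> nat \<Rightarrow> (nat \<times> nat \<times> nat) list" where
  "gRSK_moves n m = concat (map (Rmap_moves m) [1..<n + 1])"

lemma fold_concat_map: "fold f (concat (map g xs)) z = fold (\<lambda>x. fold f (g x)) xs z"
  by (induction xs arbitrary: z) auto

lemma pimove_eq_fold: "pimove a j = fold move (map (\<lambda>b. (a, b, k)) [1..<j + 1])"
proof -
  have "pimove a j X = fold (lmove a) [1..<j + 1] X" for X
    by (induction j arbitrary: X) auto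
  then show ?thesis
    by (simp add: fun_eq_iff fold_map o_def del: upt_Suc)
qed

text \<open>\<open>Rmap\<close> ignores its first argument, hence the free \<open>N\<close> in several lemmas below.\<close>

lemma Rmap_eq_fold: "Rmap n m i = fold move (Rmap_moves m i)"
proof -
  have "(\<lambda>k. pimove (i - k) (m - k)) = (\<lambda>k. fold move (map (\<lambda>b. (i - k, b, k)) [1..<m - k + 1]))"
    by (intro ext pimove_eq_fold)
  then show ?thesis
    by (intro ext) (simp add: Rmap_def Rmap_moves_def fold_concat_map del: upt_Suc)
qed

lemma gRSK_eq_fold: "gRSK n m = fold move (gRSK_moves n m)"
  by (simp add: fun_eq_iff gRSK_def gRSK_moves_def fold_concat_map Rmap_eq_fold del: upt_Suc)

lemma gRSK_Suc: "gRSK (Suc n) m X = Rmap (Suc n) m (Suc n) (gRSK n m X)"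
  by (simp add: gRSK_eq_fold Rmap_eq_fold gRSK_moves_def)

lemma mem_Rmap_moves:
  "(a, b, k) \<in> set (Rmap_moves m i) \<longleftrightarrow> a = i - k \<and> k < min i m \<and> 1 \<le> b \<and> b \<le> m - k"
  by (auto simp: Rmap_moves_def image_iff simp del: upt_Suc)

lemma mem_gRSK_moves:
  "(a, b, k) \<in> set (gRSK_moves n m) \<longleftrightarrow> 1 \<le> a \<and> 1 \<le> b \<and> a + k \<le> n \<and> b + k \<le> m"
proof
  assume "(a, b, k) \<in> set (gRSK_moves n m)"
  then show "1 \<le> a \<and> 1 \<le> b \<and> a + k \<le> n \<and> b + k \<le> m"
    by (auto simp: gRSK_moves_def mem_Rmap_moves simp del: upt_Suc)
next
  assume bounds: "1 \<le> a \<and> 1 \<le> b \<and> a + k \<le> n \<and> b + k \<le> m"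
  then have "(a, b, k) \<in> set (Rmap_moves m (a + k))"
    by (auto simp: mem_Rmap_moves)
  moreover have "a + k \<in> set [1..<n + 1]"
    using bounds by auto
  ultimately show "(a, b, k) \<in> set (gRSK_moves n m)"
    unfolding gRSK_moves_def by auto
qed

fun move_key :: "nat \<times> nat \<times> nat \<Rightarrow> nat \<times> nat \<times> nat" where
  "move_key (a, b, k) = (a + k, k, b)"

definition key_less :: "nat \<times> nat \<times> nat \<Rightarrow> nat \<times> nat \<times> nat \<Rightarrow> bool" where
  "key_less x y \<longleftrightarrow> move_key x < move_key y"

lemma sorted_concat_map:
  assumes "sorted_wrt P xs" "\<forall>x\<in>set xs. sorted_wrt R (g x)"
    "\<forall>x\<in>set xs. \<forall>y\<in>set xs. P x y \<longrightarrow> (\<forall>u\<in>set (g x). \<forall>v\<in>set (g y). R u v)"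
  shows "sorted_wrt R (concat (map g xs))"
  using assms by (induction xs) (auto simp: sorted_wrt_append)

lemma sorted_Rmap_moves: "sorted_wrt key_less (Rmap_moves m i)"
  unfolding Rmap_moves_def
proof (rule sorted_concat_map[where P = "(<)"])
  show "\<forall>k\<in>set [0..<min i m]. sorted_wrt key_less (map (\<lambda>b. (i - k, b, k)) [1..<m - k + 1])"
    by (auto simp: sorted_wrt_map key_less_def intro: sorted_wrt_mono_rel[OF _ sorted_wrt_upt]
             simp del: upt_Suc)
qed (auto simp: key_less_def simp del: upt_Suc)

lemma sorted_gRSK_moves: "sorted_wrt key_less (gRSK_moves n m)"
  unfolding gRSK_moves_def
proof (rule sorted_concat_map[where P = "(<)"])
  show "\<forall>i\<in>set [1..<n + 1]. \<forall>j\<in>set [1..<n + 1]. i < j \<longrightarrow>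
      (\<forall>u\<in>set (Rmap_moves m i). \<forall>v\<in>set (Rmap_moves m j). key_less u v)"
    by (auto simp: mem_Rmap_moves key_less_def simp del: upt_Suc)
qed (simp_all add: sorted_Rmap_moves del: upt_Suc)

lemma distinct_gRSK_moves: "distinct (gRSK_moves n m)"
proof -
  have "sorted_wrt (<) (map move_key (gRSK_moves n m))"
    using sorted_gRSK_moves by (simp add: sorted_wrt_map key_less_def[abs_def])
  then show ?thesis
    by (simp add: strict_sorted_iff distinct_map)
qed

fun swap_move :: "nat \<times> nat \<times> nat \<Rightarrow> nat \<times> nat \<times> nat" where
  "swap_move (a, b, k) = (b, a, k)"

lemma swap_move_swap_move [simp]: "swap_move (swap_move e) = e"
  by (cases e) simp

lemma fold_move_transpose:
  assumes "\<forall>(a, b, k)\<in>set es. 1 \<le> a \<and> 1 \<le> b"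
  shows "fold move es (transpose_mat X) = transpose_mat (fold move (map swap_move es) X)"
  using assms
proof (induction es arbitrary: X)
  case Nil
  then show ?case by simp
next
  case (Cons e es)
  then show ?case by (cases e) (simp add: lmove_transpose)
qed

lemma lmove_commute_if_key_order_flips:
  assumes "1 \<le> a" "1 \<le> b" "1 \<le> c" "1 \<le> d"
    and "move_key (a, b, k) < move_key (c, d, l)" "move_key (d, c, l) < move_key (b, a, k)"
  shows "lmove a b (lmove c d X) = lmove c d (lmove a b X)"
  by (rule lmove_commute) (use assms in \<open>auto simp: lmove_writes_def lmove_window_def\<close>)

theorem gRSK_transpose: "gRSK m n (transpose_mat X) = transpose_mat (gRSK n m X)"
proof -
  let ?swapped_less = "\<lambda>x y. key_less (swap_move x) (swap_move y)"
  have sorted_swapped: "sorted_wrt ?swapped_less (map swap_move (gRSK_moves m n))"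
    by (simp add: sorted_wrt_map sorted_gRSK_moves)
  have "fold move (gRSK_moves n m) X = fold move (map swap_move (gRSK_moves m n)) X"
  proof (rule fold_reorder[OF sorted_gRSK_moves sorted_swapped])
    show "set (gRSK_moves n m) = set (map swap_move (gRSK_moves m n))"
    proof (rule set_eqI)
      fix e :: "nat \<times> nat \<times> nat"
      obtain a b k where e: "e = (a, b, k)"
        by (cases e)
      show "e \<in> set (gRSK_moves n m) \<longleftrightarrow> e \<in> set (map swap_move (gRSK_moves m n))"
        unfolding e set_map image_iff
        by (auto simp: mem_gRSK_moves intro: bexI[of _ "(b, a, k)"])
    qed
    show "distinct (map swap_move (gRSK_moves m n))"
      by (simp add: distinct_map distinct_gRSK_moves inj_on_def) (metis swap_move_swap_move)
    show "move x (move y Y) = move y (move x Y)"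
      if "x \<in> set (gRSK_moves n m)" "y \<in> set (gRSK_moves n m)" "key_less x y" "?swapped_less y x"
      for x y Y
    proof -
      obtain a b k c d l where xy: "x = (a, b, k)" "y = (c, d, l)"
        by (cases x, cases y)
      show ?thesis
        unfolding xy move.simps
        by (rule lmove_commute_if_key_order_flips) (use that xy in \<open>auto simp: mem_gRSK_moves key_less_def\<close>)
    qed
  qed (simp add: distinct_gRSK_moves)
  moreover have "\<forall>(a, b, k)\<in>set (gRSK_moves m n). 1 \<le> a \<and> 1 \<le> b"
    by (auto simp: mem_gRSK_moves)
  ultimately show ?thesis
    by (simp add: gRSK_eq_fold fold_move_transpose)
qed

lemma fold_move_eq_on_box:
  assumes "\<forall>(a, b, k)\<in>set es. a \<in> {1..P} \<and> b \<in> {1..Q}" "eq_on_box P Q X Y"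
  shows "eq_on_box P Q (fold move es X) (fold move es Y)"
  using assms
proof (induction es arbitrary: X Y)
  case Nil
  then show ?case by simp
next
  case (Cons e es)
  then show ?case by (cases e) (simp add: lmove_eq_on_box)
qed

lemma fold_move_pos_on_box:
  assumes "\<forall>(a, b, k)\<in>set es. a \<in> {1..P} \<and> b \<in> {1..Q}" "pos_on_box P Q X"
  shows "pos_on_box P Q (fold move es X)"
  using assms
proof (induction es arbitrary: X)
  case Nil
  then show ?case by simp
next
  case (Cons e es)
  then show ?case by (cases e) (simp add: lmove_pos_on_box)
qed

lemma fold_move_outside:
  assumes "\<forall>(a, b, k)\<in>set es. (p, q) \<notin> lmove_writes a b"
  shows "fold move es X p q = X p q"
  using assms
proof (induction es arbitrary: X)
  case Nil
  then show ?case by simp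
next
  case (Cons e es)
  then show ?case by (cases e) (simp add: lmove_outside)
qed

lemma gRSK_eq_on_box: "eq_on_box n m X Y \<Longrightarrow> eq_on_box n m (gRSK n m X) (gRSK n m Y)"
  unfolding gRSK_eq_fold by (rule fold_move_eq_on_box) (auto simp: mem_gRSK_moves)

lemma gRSK_pos_on_box: "pos_on_box n m X \<Longrightarrow> pos_on_box n m (gRSK n m X)"
  unfolding gRSK_eq_fold by (rule fold_move_pos_on_box) (auto simp: mem_gRSK_moves)

lemma gRSK_below: "n < p \<Longrightarrow> gRSK n m X p q = X p q"
  unfolding gRSK_eq_fold by (rule fold_move_outside) (auto simp: mem_gRSK_moves lmove_writes_def)

lemma Rmap_eq_on_box:
  "i \<le> n \<Longrightarrow> eq_on_box n m X Y \<Longrightarrow> eq_on_box n m (Rmap N m i X) (Rmap N m i Y)"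
  unfolding Rmap_eq_fold by (rule fold_move_eq_on_box) (auto simp: mem_Rmap_moves)

lemma Rmap_pos_on_box: "i \<le> n \<Longrightarrow> pos_on_box n m X \<Longrightarrow> pos_on_box n m (Rmap N m i X)"
  unfolding Rmap_eq_fold by (rule fold_move_pos_on_box) (auto simp: mem_Rmap_moves)

lemma Rmap_above_band: "p + m < q + i \<Longrightarrow> Rmap N m i X p q = X p q"
  unfolding Rmap_eq_fold by (rule fold_move_outside) (auto simp: mem_Rmap_moves lmove_writes_def)

lemma gRSK_symmetric:
  assumes "\<And>i j. i \<in> {1..n} \<Longrightarrow> j \<in> {1..n} \<Longrightarrow> W i j = W j i" "i \<in> {1..n}" "j \<in> {1..n}"
  shows "gRSK n n W i j = gRSK n n W j i"
proof -
  have "eq_on_box n n (gRSK n n (transpose_mat W)) (gRSK n n W)"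
    using assms(1) by (intro gRSK_eq_on_box) (simp add: eq_on_box_def transpose_mat_def)
  then have "gRSK n n W i j = gRSK n n (transpose_mat W) i j"
    using assms(2,3) by (simp add: eq_on_box_def)
  also have "\<dots> = gRSK n n W j i"
    by (simp only: gRSK_transpose) (simp add: transpose_mat_def)
  finally show ?thesis .
qed

section \<open>The diagonal under \<open>R\<^sup>n\<^sup>,\<^sup>n\<^sub>n\<close>\<close>

lemma fold_fixes_entry:
  assumes "\<forall>k\<in>set ks. \<forall>Y. f k Y p q = Y p q"
  shows "fold f ks X p q = X p q"
  using assms by (induction ks arbitrary: X) auto

lemma pimove_outside:
  assumes "p = a \<longrightarrow> q = 0 \<or> j < q" "p = a - 1 \<longrightarrow> j \<le> q"
  shows "pimove a j X p q = X p q"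
  using assms by (induction j) (auto simp: lmove_outside lmove_writes_def)

lemma pimove_last_step:
  fixes X :: mat
  assumes "2 \<le> r"
  defines "Z \<equiv> pimove r (r - 1) X"
  shows "pimove r r X (r - 1) (r - 1)
           = X (r - 1) r * Z r (r - 1) / (X (r - 1) (r - 1) * X (r - 1) r + X (r - 1) (r - 1) * Z r (r - 1))"
    and "pimove r r X r r = X r r * (X (r - 1) r + Z r (r - 1))"
    and "pimove r r X r (r - 1) = Z r (r - 1)"
proof -
  have last: "pimove r r X = lmove r r Z"
    using assms(1) unfolding Z_def by (cases r) auto
  have Z: "Z (r - 1) r = X (r - 1) r" "Z (r - 1) (r - 1) = X (r - 1) (r - 1)" "Z r r = X r r"
    unfolding Z_def using assms(1) by (auto intro: pimove_outside)
  show "pimove r r X (r - 1) (r - 1)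
           = X (r - 1) r * Z r (r - 1) / (X (r - 1) (r - 1) * X (r - 1) r + X (r - 1) (r - 1) * Z r (r - 1))"
    using lmove_upper_left[of r r Z] assms(1) Z by (simp add: last)
  show "pimove r r X r r = X r r * (X (r - 1) r + Z r (r - 1))"
    using lmove_lower_right[of r r Z] assms(1) Z by (simp add: last)
  show "pimove r r X r (r - 1) = Z r (r - 1)"
    unfolding last by (rule lmove_outside) (use assms(1) in \<open>auto simp: lmove_writes_def\<close>)
qed

definition Rmap_square_partial :: "nat \<Rightarrow> nat \<Rightarrow> mat \<Rightarrow> mat" where
  "Rmap_square_partial n r X = fold (\<lambda>k. pimove (n - k) (n - k)) [0..<n - r] X"

lemma Rmap_square_eq_partial: "Rmap N n n X = Rmap_square_partial n 0 X"
  by (simp add: Rmap_square_partial_def Rmap_def)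

lemma Rmap_square_partial_self: "Rmap_square_partial n n X = X"
  by (simp add: Rmap_square_partial_def)

lemma Rmap_square_partial_step:
  assumes "1 \<le> r" "r \<le> n"
  shows "Rmap_square_partial n (r - 1) X = pimove r r (Rmap_square_partial n r X)"
proof -
  have "n - (r - 1) = Suc (n - r)" "n - (n - r) = r"
    using assms by auto
  then show ?thesis
    by (simp add: Rmap_square_partial_def)
qed

lemma Rmap_square_partial_upper_rows:
  "p < r \<Longrightarrow> Rmap_square_partial n r X p q = X p q"
  unfolding Rmap_square_partial_def by (rule fold_fixes_entry) (auto intro: pimove_outside)

lemma Rmap_square_partial_lower_rows:
  assumes "s < p" "s \<le> n"
  shows "Rmap N n n X p q = Rmap_square_partial n s X p q"
proof -
  have "[0..<n] = [0..<n - s] @ [n - s..<n]"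
    using assms(2) by (metis diff_le_self le_add_diff_inverse upt_add_eq_append zero_le)
  then have "Rmap N n n X p q = fold (\<lambda>k. pimove (n - k) (n - k)) [n - s..<n] (Rmap_square_partial n s X) p q"
    by (simp add: Rmap_def Rmap_square_partial_def)
  also have "\<dots> = Rmap_square_partial n s X p q"
    by (rule fold_fixes_entry) (use assms in \<open>auto intro!: pimove_outside\<close>)
  finally show ?thesis .
qed

lemma Rmap_square_diagonal:
  fixes n :: nat and M :: mat
  defines "t \<equiv> Rmap n n n M"
  assumes "2 \<le> n"
    and nonzero: "\<And>i. 1 \<le> i \<Longrightarrow> i < n \<Longrightarrow> M i (i + 1) \<noteq> 0"
    and sym: "\<And>r. 2 \<le> r \<Longrightarrow> r \<le> n \<Longrightarrow> t r (r - 1) = t (r - 1) r"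
  shows "t 1 1 = M 1 2 / (2 * M 1 1)"
    and "\<And>i. 2 \<le> i \<Longrightarrow> i \<le> n - 1 \<Longrightarrow> t i i = M i (i + 1) * M (i - 1) i / M i i"
    and "t n n = 2 * M (n - 1) n * M n n"
proof -
  define Y where "Y r = Rmap_square_partial n r M" for r
  have corner: "Y (r - 1) (r - 1) (r - 1) = M (r - 1) r / (2 * M (r - 1) (r - 1))"
    and diag: "t r r = 2 * M (r - 1) r * Y r r r"
    if r: "2 \<le> r" "r \<le> n" for r
  proof -
    let ?Z = "pimove r (r - 1) (Y r)"
    have Y_prev: "Y (r - 1) = pimove r r (Y r)"
      using r Rmap_square_partial_step[of r n M] by (simp add: Y_def)
    have row_above: "Y r (r - 1) q = M (r - 1) q" for q
      using r by (simp add: Y_def Rmap_square_partial_upper_rows)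
    have "?Z r (r - 1) = Y (r - 1) r (r - 1)"
      using r pimove_last_step(3)[of r "Y r"] Y_prev by simp
    also have "\<dots> = t r (r - 1)"
      using r Rmap_square_partial_lower_rows[of "r - 1" r] by (simp add: t_def Y_def)
    also have "\<dots> = t (r - 1) r"
      using r by (rule sym)
    also have "\<dots> = M (r - 1) r"
      using r by (simp add: t_def Rmap_above_band)
    finally have Z: "?Z r (r - 1) = M (r - 1) r" .
    have "M (r - 1) r \<noteq> 0"
      using nonzero[of "r - 1"] r by simp
    then show "Y (r - 1) (r - 1) (r - 1) = M (r - 1) r / (2 * M (r - 1) (r - 1))"
      using r pimove_last_step(1)[of r "Y r"] row_above
      by (cases "M (r - 1) (r - 1) = 0") (use Y_prev Z in \<open>simp_all add: field_simps\<close>)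
    have "t r r = Y (r - 1) r r"
      using r by (simp add: t_def Y_def Rmap_square_partial_lower_rows[of "r - 1" r])
    then show "t r r = 2 * M (r - 1) r * Y r r r"
      using r pimove_last_step(2)[of r "Y r"] row_above Y_prev Z by simp
  qed
  have "Y 0 = Y 1"
    using Rmap_square_partial_step[of 1 n M] assms(2) lmove_1_1 by (simp add: Y_def)
  then show "t 1 1 = M 1 2 / (2 * M 1 1)"
    using corner[of 2] assms(2) by (simp add: t_def Y_def Rmap_square_eq_partial)
  show "t i i = M i (i + 1) * M (i - 1) i / M i i" if "2 \<le> i" "i \<le> n - 1" for i
    using diag[of i] corner[of "i + 1"] that by simp
  show "t n n = 2 * M (n - 1) n * M n n"
    using diag[of n] assms(2) by (simp add: Y_def Rmap_square_partial_self)
qed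

section \<open>Symmetric input\<close>

lemma gRSK_add_column:
  "gRSK n (Suc m) X = transpose_mat (Rmap (Suc m) n (Suc m) (gRSK m n (transpose_mat X)))"
proof -
  have "gRSK n (Suc m) X = transpose_mat (gRSK (Suc m) n (transpose_mat X))"
    by (simp only: gRSK_transpose) (simp add: transpose_mat_def)
  then show ?thesis
    by (simp only: gRSK_Suc)
qed

text \<open>The paper's \<open>S\<close>: \<open>T\<^sup>n\<^sup>-\<^sup>1\<^sup>,\<^sup>n\<^sup>-\<^sup>1(W\<^sub>n\<^sub>-\<^sub>1\<^sub>,\<^sub>n\<^sub>-\<^sub>1)\<close> with the row \<open>w\<^sub>1\<^sub>n \<dots> w\<^sub>n\<^sub>-\<^sub>1\<^sub>,\<^sub>n\<close>
  appended, then \<open>R\<^sup>n\<^sup>,\<^sup>n\<^sup>-\<^sup>1\<^sub>n\<close> applied and the result transposed.\<close>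

definition bordered_minor :: "nat \<Rightarrow> mat \<Rightarrow> mat" where
  "bordered_minor n W = (\<lambda>i j. if i < n then gRSK (n - 1) (n - 1) W i j else W j n)"

definition inserted_minor :: "nat \<Rightarrow> mat \<Rightarrow> mat" where
  "inserted_minor n W = (\<lambda>i j. Rmap n (n - 1) n (bordered_minor n W) j i)"

lemma gRSK_symmetric_recursion:
  fixes n :: nat and W :: mat
  assumes "2 \<le> n"
    and sym: "\<And>i j. 1 \<le> i \<Longrightarrow> i \<le> n \<Longrightarrow> 1 \<le> j \<Longrightarrow> j \<le> n \<Longrightarrow> W i j = W j i"
  shows "eq_on_box n n (gRSK n n W) (Rmap n n n (\<lambda>i j. if i < n then inserted_minor n W i j else W j n))"
proof -
  define M where "M = (\<lambda>i j. if i < n then inserted_minor n W i j else W j n)"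
  obtain p where n: "n = Suc p"
    using assms(1) by (cases n) auto
  have "eq_on_box p p (transpose_mat W) W"
    using sym by (simp add: eq_on_box_def transpose_mat_def n)
  then have "eq_on_box p p (gRSK p p (transpose_mat W)) (gRSK p p W)"
    by (rule gRSK_eq_on_box)
  then have "eq_on_box n p (gRSK p p (transpose_mat W)) (bordered_minor n W)"
    by (auto simp: eq_on_box_def bordered_minor_def n gRSK_below transpose_mat_def le_Suc_eq)
  then have RA: "eq_on_box n p (Rmap n p n (gRSK p p (transpose_mat W))) (Rmap n p n (bordered_minor n W))"
    by (rule Rmap_eq_on_box[rotated]) simp
  have "eq_on_box n n (gRSK p n W) M"
    unfolding eq_on_box_def
  proof (intro ballI)
    fix i j assume ij: "i \<in> {1..n}" "j \<in> {1..n}"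
    show "gRSK p n W i j = M i j"
    proof (cases "i < n")
      case True
      then show ?thesis
        using RA ij by (simp add: gRSK_add_column n eq_on_box_def M_def inserted_minor_def transpose_mat_def)
    next
      case False
      then show ?thesis
        using ij sym[of j n] by (simp add: gRSK_below M_def n)
    qed
  qed
  then show ?thesis
    by (simp add: n gRSK_Suc Rmap_eq_on_box M_def)
qed

lemma inserted_minor_pos:
  fixes n :: nat and W :: mat
  assumes pos: "\<And>i j. 1 \<le> i \<Longrightarrow> i \<le> n \<Longrightarrow> 1 \<le> j \<Longrightarrow> j \<le> n \<Longrightarrow> W i j > 0"
    and "1 \<le> i" "i \<le> n - 1" "1 \<le> j" "j \<le> n"
  shows "inserted_minor n W i j > 0"
proof -
  have "pos_on_box (n - 1) (n - 1) (gRSK (n - 1) (n - 1) W)"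
    using pos by (intro gRSK_pos_on_box) (auto simp: pos_on_box_def)
  then have "pos_on_box n (n - 1) (bordered_minor n W)"
    using pos by (auto simp: pos_on_box_def bordered_minor_def)
  then have "pos_on_box n (n - 1) (Rmap n (n - 1) n (bordered_minor n W))"
    by (rule Rmap_pos_on_box[rotated]) simp
  then show ?thesis
    using assms(2-) by (simp add: pos_on_box_def inserted_minor_def)
qed

lemma inserted_minor_diagonal: "k < n \<Longrightarrow> inserted_minor n W k k = gRSK (n - 1) (n - 1) W k k"
  by (simp add: inserted_minor_def Rmap_above_band bordered_minor_def)

lemma gRSK_symmetric_diagonal:
  fixes n :: nat and W :: mat
  assumes "2 \<le> n"
    and pos: "\<And>i j. 1 \<le> i \<Longrightarrow> i \<le> n \<Longrightarrow> 1 \<le> j \<Longrightarrow> j \<le> n \<Longrightarrow> W i j > 0"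
    and sym: "\<And>i j. 1 \<le> i \<Longrightarrow> i \<le> n \<Longrightarrow> 1 \<le> j \<Longrightarrow> j \<le> n \<Longrightarrow> W i j = W j i"
  defines "S \<equiv> inserted_minor n W" and "t \<equiv> gRSK n n W"
  shows "\<forall>i j. 1 \<le> i \<and> i < j \<and> j \<le> n \<longrightarrow> t i j = S i j"
    and "t 1 1 = S 1 2 / (2 * S 1 1)"
    and "\<forall>i. 2 \<le> i \<and> i \<le> n - 1 \<longrightarrow> t i i = S i (i + 1) * S (i - 1) i / S i i"
    and "t n n = 2 * S (n - 1) n * W n n"
proof -
  define M where "M = (\<lambda>i j. if i < n then S i j else W j n)"
  have t_eq: "t i j = Rmap n n n M i j" if "i \<in> {1..n}" "j \<in> {1..n}" for i j
    using gRSK_symmetric_recursion[of n W, OF assms(1) sym] that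
    unfolding eq_on_box_def t_def M_def S_def by blast
  have "Rmap n n n M r (r - 1) = Rmap n n n M (r - 1) r" if "2 \<le> r" "r \<le> n" for r
  proof -
    have r: "r \<in> {1..n}" "r - 1 \<in> {1..n}"
      using that by auto
    then have "t r (r - 1) = t (r - 1) r"
      unfolding t_def using sym by (intro gRSK_symmetric) auto
    then show ?thesis
      using t_eq[OF r] t_eq[OF r(2,1)] by simp
  qed
  moreover have "M i (i + 1) \<noteq> 0" if "1 \<le> i" "i < n" for i
    using inserted_minor_pos[of n W i "i + 1", OF pos] that by (force simp: M_def S_def)
  ultimately have diag: "Rmap n n n M 1 1 = M 1 2 / (2 * M 1 1)"
      "\<And>i. 2 \<le> i \<Longrightarrow> i \<le> n - 1 \<Longrightarrow> Rmap n n n M i i = M i (i + 1) * M (i - 1) i / M i i"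
      "Rmap n n n M n n = 2 * M (n - 1) n * M n n"
    using Rmap_square_diagonal[OF assms(1), of M] by blast+
  show "\<forall>i j. 1 \<le> i \<and> i < j \<and> j \<le> n \<longrightarrow> t i j = S i j"
    using t_eq by (auto simp: Rmap_above_band M_def)
  show "t 1 1 = S 1 2 / (2 * S 1 1)"
    using diag(1) t_eq[of 1 1] assms(1) by (simp add: M_def)
  show "\<forall>i. 2 \<le> i \<and> i \<le> n - 1 \<longrightarrow> t i i = S i (i + 1) * S (i - 1) i / S i i"
    using diag(2) t_eq by (auto simp: M_def)
  show "t n n = 2 * S (n - 1) n * W n n"
    using diag(3) t_eq[of n n] assms(1) by (simp add: M_def)
qed

fun alt_quot :: "(nat \<Rightarrow> real) \<Rightarrow> nat \<Rightarrow> real" where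
  "alt_quot d 0 = 1"
| "alt_quot d (Suc k) = d (Suc k) / alt_quot d k"

lemma alt_quot_eq_prod_quot:
  "alt_quot d n = (\<Prod>j<(n + 1) div 2. d (n - 2 * j)) / (\<Prod>j<n div 2. d (n - 1 - 2 * j))"
proof (induction n)
  case 0
  then show ?case by simp
next
  case (Suc n)
  have "(\<Prod>j<(Suc n + 1) div 2. d (Suc n - 2 * j)) = d (Suc n) * (\<Prod>j<n div 2. d (n - 1 - 2 * j))"
  proof -
    have "(Suc n + 1) div 2 = Suc (n div 2)"
      by simp
    moreover have "(\<Prod>j<n div 2. d (Suc n - 2 * Suc j)) = (\<Prod>j<n div 2. d (n - 1 - 2 * j))"
      by (rule prod.cong) auto
    ultimately show ?thesis
      by (simp only: prod.lessThan_Suc_shift) simp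
  qed
  moreover have "(\<Prod>j<Suc n div 2. d (Suc n - 1 - 2 * j)) = (\<Prod>j<(n + 1) div 2. d (n - 2 * j))"
    by simp
  ultimately show ?case
    by (simp add: Suc.IH)
qed

lemma alt_quot_cong: "(\<And>i. 1 \<le> i \<Longrightarrow> i \<le> k \<Longrightarrow> d i = e i) \<Longrightarrow> alt_quot d k = alt_quot e k"
  by (induction k) auto

lemma alt_quot_telescope:
  assumes "1 \<le> k"
    and first: "d 1 = e 1 / (2 * s 1)"
    and rec: "\<And>i. 2 \<le> i \<Longrightarrow> i \<le> k \<Longrightarrow> d i = e i * e (i - 1) / s i"
    and nonzero: "\<And>i. 1 \<le> i \<Longrightarrow> i \<le> k \<Longrightarrow> e i \<noteq> 0 \<and> s i \<noteq> 0"
  shows "alt_quot d k * alt_quot s k = (if odd k then e k / 2 else 2 * e k)"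
  using assms(1) rec nonzero
proof (induction k rule: dec_induct)
  case base
  then show ?case
    using first nonzero[of 1] by simp
next
  case (step k)
  have "alt_quot d (Suc k) * alt_quot s (Suc k) = d (Suc k) * s (Suc k) / (alt_quot d k * alt_quot s k)"
    by simp
  also have "\<dots> = e (Suc k) * e k / (if odd k then e k / 2 else 2 * e k)"
    using step by simp
  also have "\<dots> = (if odd (Suc k) then e (Suc k) / 2 else 2 * e (Suc k))"
    using step.prems(2)[of k] step.hyps by auto
  finally show ?case .
qed

lemma gRSK_symmetric_alt_quot:
  fixes n :: nat and W :: mat
  assumes "1 \<le> n"
    and pos: "\<And>i j. 1 \<le> i \<Longrightarrow> i \<le> n \<Longrightarrow> 1 \<le> j \<Longrightarrow> j \<le> n \<Longrightarrow> W i j > 0"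
    and sym: "\<And>i j. 1 \<le> i \<Longrightarrow> i \<le> n \<Longrightarrow> 1 \<le> j \<Longrightarrow> j \<le> n \<Longrightarrow> W i j = W j i"
  shows "4 ^ (n div 2) * (\<Prod>i=1..n. W i i) = alt_quot (\<lambda>i. gRSK n n W i i) n"
  using assms
proof (induction n arbitrary: W rule: dec_induct)
  case base
  then show ?case
    using lmove_1_1 by (simp add: gRSK_def Rmap_def)
next
  case (step p)
  define S where "S = inserted_minor (Suc p) W"
  let ?t = "\<lambda>i. gRSK (Suc p) (Suc p) W i i" and ?s = "\<lambda>i. S i i"
  let ?c = "if odd p then S p (p + 1) / 2 else 2 * S p (p + 1)"
  have diag: "?t 1 = S 1 2 / (2 * S 1 1)"
      "\<And>i. 2 \<le> i \<Longrightarrow> i \<le> p \<Longrightarrow> ?t i = S i (i + 1) * S (i - 1) i / S i i"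
      "?t (Suc p) = 2 * S p (Suc p) * W (Suc p) (Suc p)"
  proof -
    have "2 \<le> Suc p"
      using step.hyps by simp
    note diagonal = gRSK_symmetric_diagonal[of "Suc p" W, OF this step.prems(1) step.prems(2), folded S_def]
    show "?t 1 = S 1 2 / (2 * S 1 1)"
      using diagonal(2) by simp
    show "?t i = S i (i + 1) * S (i - 1) i / S i i" if "2 \<le> i" "i \<le> p" for i
      using diagonal(3) that by simp
    show "?t (Suc p) = 2 * S p (Suc p) * W (Suc p) (Suc p)"
      using diagonal(4) by simp
  qed
  have S_pos: "S i j > 0" if "1 \<le> i" "i \<le> p" "1 \<le> j" "j \<le> Suc p" for i j
    using inserted_minor_pos[of "Suc p" W i j, OF step.prems(1)] that by (simp add: S_def)
  have telescope: "alt_quot ?t p * alt_quot ?s p = ?c"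
  proof (rule alt_quot_telescope[where e = "\<lambda>i. S i (i + 1)"])
    show "?t i = S i (i + 1) * S (i - 1) (i - 1 + 1) / S i i" if "2 \<le> i" "i \<le> p" for i
      using diag(2)[OF that] that by simp
    show "S i (i + 1) \<noteq> 0 \<and> S i i \<noteq> 0" if "1 \<le> i" "i \<le> p" for i
      using S_pos[of i "i + 1"] S_pos[of i i] that by simp
  qed (use step.hyps diag(1) in \<open>simp_all add: numeral_2_eq_2\<close>)
  have "?c \<noteq> 0"
    using S_pos[of p "Suc p"] step.hyps by simp
  then have s_nonzero: "alt_quot ?s p \<noteq> 0"
    using telescope by auto
  have "alt_quot ?s p = alt_quot (\<lambda>i. gRSK p p W i i) p"
    by (rule alt_quot_cong) (simp add: S_def inserted_minor_diagonal)
  also have "\<dots> = 4 ^ (p div 2) * (\<Prod>i=1..p. W i i)"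
    by (rule step.IH[symmetric]) (use step.prems in auto)
  finally have IH: "alt_quot ?s p = 4 ^ (p div 2) * (\<Prod>i=1..p. W i i)" .
  have "alt_quot ?t p = ?c / alt_quot ?s p"
    using telescope s_nonzero by (simp add: eq_divide_eq)
  then have "alt_quot ?t (Suc p) = ?t (Suc p) * alt_quot ?s p / ?c"
    by simp
  also have "\<dots> = (if odd p then 4 else 1) * alt_quot ?s p * W (Suc p) (Suc p)"
    using diag(3) S_pos[of p "Suc p"] step.hyps by (simp add: field_simps)
  also have "\<dots> = 4 ^ (Suc p div 2) * (\<Prod>i=1..Suc p. W i i)"
    by (simp add: IH prod.cl_ivl_Suc odd_Suc_div_two even_Suc_div_two)
  finally show ?case by simp
qed

lemma prod_odd_zshape:
  "(\<Prod>j<(n + 1) div 2. gRSK n n W (n - 2 * j) (n - 2 * j)) = (\<Prod>i\<in>{i\<in>{1..n}. odd i}. zshape n W i)"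
  by (rule prod.reindex_bij_witness[where i = "\<lambda>i. (i - 1) div 2" and j = "\<lambda>j. 2 * j + 1"])
     (auto simp: zshape_def Suc_diff_Suc elim!: oddE)

lemma prod_even_zshape:
  "(\<Prod>j<n div 2. gRSK n n W (n - 1 - 2 * j) (n - 1 - 2 * j)) = (\<Prod>i\<in>{i\<in>{1..n}. even i}. zshape n W i)"
  by (rule prod.reindex_bij_witness[where i = "\<lambda>i. (i - 2) div 2" and j = "\<lambda>j. 2 * j + 2"])
     (auto simp: zshape_def Suc_diff_Suc elim!: evenE)

theorem lemma5p1:
  fixes n :: nat and W :: mat
  assumes n1: "1 \<le> n"
    and pos: "\<And>i j. 1 \<le> i \<Longrightarrow> i \<le> n \<Longrightarrow> 1 \<le> j \<Longrightarrow> j \<le> n \<Longrightarrow> W i j > 0"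
    and sym: "\<And>i j. 1 \<le> i \<Longrightarrow> i \<le> n \<Longrightarrow> 1 \<le> j \<Longrightarrow> j \<le> n \<Longrightarrow> W i j = W j i"
  shows
    "(2 \<le> n \<longrightarrow>
      (let A = (\<lambda>i j. if i < n then gRSK (n-1) (n-1) W i j else W j n);
           S = (\<lambda>i j. Rmap n (n-1) n A j i);
           M = (\<lambda>i j. if i < n then S i j else W j n);
           t = gRSK n n W
       in (\<forall>i\<in>{1..n}. \<forall>j\<in>{1..n}. t i j = Rmap n n n M i j)
        \<and> (\<forall>i j. 1 \<le> i \<and> i < j \<and> j \<le> n \<longrightarrow> t i j = S i j)
        \<and> t 1 1 = S 1 2 / (2 * S 1 1)
        \<and> (\<forall>i. 2 \<le> i \<and> i \<le> n-1 \<longrightarrow> t i i = S i (i+1) * S (i-1) i / S i i)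
        \<and> t n n = 2 * S (n-1) n * W n n))
     \<and> (let t = gRSK n n W in
          4 ^ (n div 2) * (\<Prod>i=1..n. W i i)
            = (\<Prod>j<(n+1) div 2. t (n - 2*j) (n - 2*j))
              / (\<Prod>j<n div 2. t (n - 1 - 2*j) (n - 1 - 2*j))
        \<and> (\<Prod>j<(n+1) div 2. t (n - 2*j) (n - 2*j))
              / (\<Prod>j<n div 2. t (n - 1 - 2*j) (n - 1 - 2*j))
            = (\<Prod>i\<in>{i\<in>{1..n}. odd i}. zshape n W i)
              / (\<Prod>i\<in>{i\<in>{1..n}. even i}. zshape n W i))"
  apply (intro conjI impI)
  subgoal
    using gRSK_symmetric_recursion[of n W, OF _ sym] gRSK_symmetric_diagonal[of n W, OF _ pos sym]
    unfolding Let_def eq_on_box_def inserted_minor_def bordered_minor_def by blast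
  subgoal
    using gRSK_symmetric_alt_quot[of n W, OF n1 pos sym] alt_quot_eq_prod_quot[of "\<lambda>i. gRSK n n W i i" n]
    unfolding Let_def prod_odd_zshape prod_even_zshape by simp
  done

end
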